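(* Let $\alpha_1,\dots,\alpha_\sigma$ be distinct complex numbers with $0<|\alpha_i|<1$, and positive integers $s_1,\dots,s_\sigma$. Let $\chi(\theta)=e^{i\theta}$ on $\mathbb{T}$ and set $$g_1=c\prod_{j=1}^{\sigma}(1-\overline{\alpha_j}\chi)^{s_j},\qquad g_2=\prod_{i=1}^{\sigma}(1-\alpha_i\bar\chi)^{s_i},$$ where $c=\prod_{j=1}^\sigma(-\overline{\alpha_j}^{-1})^{s_j}$. For $N\ge 0$ let $\Phi_N=\chi^{N+1}\frac{g_1}{g_2}$ and $\tilde\Phi_N=\chi^{-N-1}\frac{g_2}{g_1}$, and define the Hankel operators $H_{\Phi_N}:H^+(\mathbb{T})\to(H^+(\mathbb{T}))^\perp$, $\psi\mapsto\pi_-(\Phi_N\psi)$, and $H_{\tilde\Phi_N}:(H^+(\mathbb{T}))^\perp\to H^+(\mathbb{T})$, $\psi\mapsto\pi_+(\tilde\Phi_N\psi)$. Let $E$ be the complex vector space spanned by the functions $\frac{1}{(1-\overline{\alpha_j}\chi)^n}$, $1\le j\le\sigma$, $1\le n\le s_j$. Then $E$ is stable under $H_{\tilde\Phi_N}H_{\Phi_N}$, i.e. $H_{\tilde\Phi_N}H_{\Phi_N}(E)\subset E$.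
   Context: $\mathbb{T}=\mathbb{R}/2\pi\mathbb{Z}$ with normalized Lebesgue measure; $H^+(\mathbb{T})=\{\psi\in L^2(\mathbb{T}):\hat\psi(u)=0 \text{ for all } u<0\}$ and $(H^+(\mathbb{T}))^\perp=\{\psi\in L^2(\mathbb{T}):\hat\psi(u)=0\text{ for all }u\ge 0\}$, where $\hat\psi(u)$ is the $u$-th Fourier coefficient. $\pi_+$ and $\pi_-$ are the orthogonal projections of $L^2(\mathbb{T})$ onto $H^+(\mathbb{T})$ and $(H^+(\mathbb{T}))^\perp$ respectively. *)

theory Defs
  imports "HOL-Analysis.Analysis"
begin

text \<open>Functions on the circle T = R/2piZ are represented by functions real => complex,
  looked at on the fundamental interval [0, 2pi]; normalized Lebesgue measure.\<close>

definition L2T :: "(real \<Rightarrow> complex) \<Rightarrow> bool" where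
  "L2T f \<longleftrightarrow> f \<in> borel_measurable (lebesgue_on {0..2*pi}) \<and>
     integrable (lebesgue_on {0..2*pi}) (\<lambda>t. (cmod (f t))\<^sup>2)"

definition fcoef :: "(real \<Rightarrow> complex) \<Rightarrow> int \<Rightarrow> complex" where
  "fcoef f u = (1 / (2 * pi)) *
     integral\<^sup>L (lebesgue_on {0..2*pi}) (\<lambda>t. f t * exp (- \<i> * of_int u * of_real t))"

definition Hplus :: "(real \<Rightarrow> complex) set" where
  "Hplus = {f. L2T f \<and> (\<forall>u<0. fcoef f u = 0)}"

definition Hperp :: "(real \<Rightarrow> complex) set" where
  "Hperp = {f. L2T f \<and> (\<forall>u\<ge>0. fcoef f u = 0)}"

text \<open>is_pi_plus psi phi: phi represents the orthogonal projection pi_+ psi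
  (phi in H^+ and psi - phi orthogonal to H^+); similarly for pi_-.\<close>
definition is_pi_plus :: "(real \<Rightarrow> complex) \<Rightarrow> (real \<Rightarrow> complex) \<Rightarrow> bool" where
  "is_pi_plus \<psi> \<phi> \<longleftrightarrow> \<phi> \<in> Hplus \<and> (\<lambda>t. \<psi> t - \<phi> t) \<in> Hperp"

definition is_pi_minus :: "(real \<Rightarrow> complex) \<Rightarrow> (real \<Rightarrow> complex) \<Rightarrow> bool" where
  "is_pi_minus \<psi> \<phi> \<longleftrightarrow> \<phi> \<in> Hperp \<and> (\<lambda>t. \<psi> t - \<phi> t) \<in> Hplus"

definition chi :: "real \<Rightarrow> complex" where
  "chi t = exp (\<i> * of_real t)"

definition cconst :: "nat \<Rightarrow> (nat \<Rightarrow> complex) \<Rightarrow> (nat \<Rightarrow> nat) \<Rightarrow> complex" where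
  "cconst \<sigma> \<alpha> s = (\<Prod>j<\<sigma>. (- inverse (cnj (\<alpha> j))) ^ s j)"

definition g1 :: "nat \<Rightarrow> (nat \<Rightarrow> complex) \<Rightarrow> (nat \<Rightarrow> nat) \<Rightarrow> real \<Rightarrow> complex" where
  "g1 \<sigma> \<alpha> s t = cconst \<sigma> \<alpha> s * (\<Prod>j<\<sigma>. (1 - cnj (\<alpha> j) * chi t) ^ s j)"

definition g2 :: "nat \<Rightarrow> (nat \<Rightarrow> complex) \<Rightarrow> (nat \<Rightarrow> nat) \<Rightarrow> real \<Rightarrow> complex" where
  "g2 \<sigma> \<alpha> s t = (\<Prod>i<\<sigma>. (1 - \<alpha> i * cnj (chi t)) ^ s i)"

definition PhiN :: "nat \<Rightarrow> (nat \<Rightarrow> complex) \<Rightarrow> (nat \<Rightarrow> nat) \<Rightarrow> nat \<Rightarrow> real \<Rightarrow> complex" where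
  "PhiN \<sigma> \<alpha> s N t = chi t ^ (N + 1) * g1 \<sigma> \<alpha> s t / g2 \<sigma> \<alpha> s t"

definition PhiTN :: "nat \<Rightarrow> (nat \<Rightarrow> complex) \<Rightarrow> (nat \<Rightarrow> nat) \<Rightarrow> nat \<Rightarrow> real \<Rightarrow> complex" where
  "PhiTN \<sigma> \<alpha> s N t = inverse (chi t ^ (N + 1)) * g2 \<sigma> \<alpha> s t / g1 \<sigma> \<alpha> s t"

definition Espace :: "nat \<Rightarrow> (nat \<Rightarrow> complex) \<Rightarrow> (nat \<Rightarrow> nat) \<Rightarrow> (real \<Rightarrow> complex) set" where
  "Espace \<sigma> \<alpha> s = {f. \<exists>a :: nat \<Rightarrow> nat \<Rightarrow> complex.
      f = (\<lambda>t. \<Sum>j<\<sigma>. \<Sum>n\<in>{1..s j}. a j n / (1 - cnj (\<alpha> j) * chi t) ^ n)}"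

end

(*
  Coefficient conditions on the circle are stable under multiplication by trigonometric
  polynomials and under division by 1 - b e^{ikt} with |b| < 1: the Fourier coefficients of
  the quotient satisfy a geometric recursion and are bounded, hence vanish.

  An element of E is P(chi)/B(chi) with B = prod (1 - conj(alpha_j) z)^(s_j), and Phi_N turns it
  into W(chi)/Q(chi) with Q = prod (z - alpha_i)^(s_i). Euclidean division W = U Q + R splits this
  into the analytic part U(chi) and R(chi)/Q(chi), which lies in the orthogonal complement because
  all roots of Q lie in the unit disc. Any other function h satisfying the defining conditions of
  pi_- differs from R(chi)/Q(chi) by a function all of whose Fourier coefficients vanish, and
  multiplication by the tilde symbol preserves this property. Finally the tilde symbol maps R(chi)/Q(chi) to R'(chi)/(chi^M B(chi)), and
  Bezout's identity for the coprime pair z^M, B gives R' = X z^M + Y B with deg X < deg B and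
  deg Y < M: the projection is X(chi)/B(chi), which lies in E by partial fractions.
*)

theory Submission
  imports
    Defs
    "HOL-Computational_Algebra.Polynomial_Factorial"
    "HOL-Computational_Algebra.Field_as_Ring"
begin

definition echar :: "int \<Rightarrow> real \<Rightarrow> complex" where
  "echar k t = exp (\<i> * of_int k * of_real t)"

definition coef_vanishing :: "int set \<Rightarrow> (real \<Rightarrow> complex) set" where
  "coef_vanishing U = {f. L2T f \<and> (\<forall>u\<in>U. fcoef f u = 0)}"

lemma Hplus_eq_coef_vanishing: "Hplus = coef_vanishing {u. u < 0}"
  by (auto simp: Hplus_def coef_vanishing_def)

lemma Hperp_eq_coef_vanishing: "Hperp = coef_vanishing {u. 0 \<le> u}"
  by (auto simp: Hperp_def coef_vanishing_def)

lemma chi_eq_echar: "chi t = echar 1 t"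
  unfolding chi_def echar_def by simp

lemma echar_0 [simp]: "echar 0 t = 1"
  unfolding echar_def by simp

lemma echar_mult: "echar a t * echar b t = echar (a + b) t"
  unfolding echar_def mult_exp_exp by (simp add: algebra_simps)

lemma norm_echar [simp]: "cmod (echar k t) = 1"
  using norm_exp_i_times[of "of_int k * t"] unfolding echar_def by (simp add: mult.assoc)

lemma continuous_on_echar [continuous_intros]:
  "continuous_on A f \<Longrightarrow> continuous_on A (\<lambda>x. echar k (f x))"
  unfolding echar_def by (intro continuous_intros)

lemma chi_power: "chi t ^ k = echar (int k) t"
  unfolding chi_def echar_def by (simp add: exp_of_nat_mult[symmetric] ac_simps)

lemma inverse_chi_power: "inverse (chi t ^ k) = echar (- int k) t"
  by (rule inverse_unique) (simp add: chi_power echar_mult)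

lemma cnj_chi: "cnj (chi t) = echar (-1) t"
  unfolding chi_def echar_def by (simp add: exp_cnj)

lemma chi_nonzero [simp]: "chi t \<noteq> 0"
  unfolding chi_def by simp

lemma norm_chi [simp]: "cmod (chi t) = 1"
  unfolding chi_eq_echar by simp

lemma L2T_integrable:
  assumes "L2T f"
  shows "integrable (lebesgue_on {0..2*pi}) f"
proof (rule Bochner_Integration.integrable_bound)
  show "integrable (lebesgue_on {0..2*pi}) (\<lambda>t. 1 + (cmod (f t))\<^sup>2)"
    using assms unfolding L2T_def by auto
  show "AE t in lebesgue_on {0..2*pi}. norm (f t) \<le> norm (1 + (cmod (f t))\<^sup>2)"
  proof (rule AE_I2)
    fix t
    have "x \<le> 1 + x\<^sup>2" for x :: real
      using zero_le_power2[of "x - 1/2"] unfolding power2_eq_square by (simp add: algebra_simps)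
    then show "norm (f t) \<le> norm (1 + (cmod (f t))\<^sup>2)" by simp
  qed
qed (use assms in \<open>auto simp: L2T_def\<close>)

lemma L2T_continuous: "continuous_on UNIV f \<Longrightarrow> L2T f"
  unfolding L2T_def
  by (auto intro!: continuous_imp_measurable_on_sets_lebesgue continuous_imp_integrable_real
      continuous_intros intro: continuous_on_subset)

lemma L2T_mult:
  assumes c: "continuous_on UNIV c" and f: "L2T f"
  shows "L2T (\<lambda>t. c t * f t)"
proof -
  have c': "continuous_on {0..2*pi} c"
    using c by (rule continuous_on_subset) simp
  obtain B where B: "\<And>t. t \<in> {0..2*pi} \<Longrightarrow> cmod (c t) \<le> B"
    using compact_imp_bounded[OF compact_continuous_image[OF c' compact_Icc]]
    unfolding bounded_iff by blast
  have m: "(\<lambda>t. c t * f t) \<in> borel_measurable (lebesgue_on {0..2*pi})"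
    using f continuous_imp_measurable_on_sets_lebesgue[OF c'] unfolding L2T_def by auto
  have "integrable (lebesgue_on {0..2*pi}) (\<lambda>t. (cmod (c t * f t))\<^sup>2)"
  proof (rule Bochner_Integration.integrable_bound)
    show "integrable (lebesgue_on {0..2*pi}) (\<lambda>t. B\<^sup>2 * (cmod (f t))\<^sup>2)"
      using f unfolding L2T_def by auto
    show "(\<lambda>t. (cmod (c t * f t))\<^sup>2) \<in> borel_measurable (lebesgue_on {0..2*pi})"
      using m by measurable
    show "AE t in lebesgue_on {0..2*pi}. norm ((cmod (c t * f t))\<^sup>2) \<le> norm (B\<^sup>2 * (cmod (f t))\<^sup>2)"
    proof (rule AE_I2)
      fix t assume "t \<in> space (lebesgue_on {0..2*pi})"
      then have "cmod (c t) * cmod (f t) \<le> B * cmod (f t)"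
        using B by (simp add: mult_right_mono)
      then have "(cmod (c t) * cmod (f t))\<^sup>2 \<le> (B * cmod (f t))\<^sup>2"
        by (intro power_mono) auto
      then show "norm ((cmod (c t * f t))\<^sup>2) \<le> norm (B\<^sup>2 * (cmod (f t))\<^sup>2)"
        by (simp add: norm_mult power_mult_distrib)
    qed
  qed
  with m show ?thesis unfolding L2T_def by blast
qed

lemma L2T_cmult: "L2T f \<Longrightarrow> L2T (\<lambda>t. a * f t)"
  using L2T_mult[of "\<lambda>_. a" f] by auto

lemma L2T_add:
  assumes f: "L2T f" and g: "L2T g"
  shows "L2T (\<lambda>t. f t + g t)"
proof -
  have m: "(\<lambda>t. f t + g t) \<in> borel_measurable (lebesgue_on {0..2*pi})"
    using f g unfolding L2T_def by auto
  have "integrable (lebesgue_on {0..2*pi}) (\<lambda>t. (cmod (f t + g t))\<^sup>2)"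
  proof (rule Bochner_Integration.integrable_bound)
    show "integrable (lebesgue_on {0..2*pi}) (\<lambda>t. 2 * (cmod (f t))\<^sup>2 + 2 * (cmod (g t))\<^sup>2)"
      using f g unfolding L2T_def by auto
    show "AE t in lebesgue_on {0..2*pi}.
        norm ((cmod (f t + g t))\<^sup>2) \<le> norm (2 * (cmod (f t))\<^sup>2 + 2 * (cmod (g t))\<^sup>2)"
    proof (rule AE_I2)
      fix t
      have "(cmod (f t + g t))\<^sup>2 \<le> (cmod (f t) + cmod (g t))\<^sup>2"
        by (intro power_mono norm_triangle_ineq) auto
      also have "\<dots> \<le> 2 * (cmod (f t))\<^sup>2 + 2 * (cmod (g t))\<^sup>2"
        using zero_le_power2[of "cmod (f t) - cmod (g t)"] by (simp add: power2_diff power2_sum)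
      finally show "norm ((cmod (f t + g t))\<^sup>2) \<le> norm (2 * (cmod (f t))\<^sup>2 + 2 * (cmod (g t))\<^sup>2)"
        by simp
    qed
    show "(\<lambda>t. (cmod (f t + g t))\<^sup>2) \<in> borel_measurable (lebesgue_on {0..2*pi})"
      using m by measurable
  qed
  with m show ?thesis unfolding L2T_def by blast
qed

lemma L2T_diff: "L2T f \<Longrightarrow> L2T g \<Longrightarrow> L2T (\<lambda>t. f t - g t)"
  using L2T_add[of f "\<lambda>t. (-1) * g t"] L2T_cmult[of g "-1"] by simp

lemma fcoef_add:
  assumes "L2T f" "L2T g"
  shows "fcoef (\<lambda>t. f t + g t) u = fcoef f u + fcoef g u"
proof -
  have "integrable (lebesgue_on {0..2*pi}) (\<lambda>t. exp (- \<i> * of_int u * of_real t) * h t)"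
    if "L2T h" for h
    by (rule L2T_integrable[OF L2T_mult[OF _ that]]) (intro continuous_intros)
  with assms show ?thesis
    unfolding fcoef_def by (simp add: distrib_left distrib_right mult.commute)
qed

lemma fcoef_cmult: "fcoef (\<lambda>t. a * f t) u = a * fcoef f u"
  unfolding fcoef_def by (simp add: mult.assoc)

lemma fcoef_diff: "L2T f \<Longrightarrow> L2T g \<Longrightarrow> fcoef (\<lambda>t. f t - g t) u = fcoef f u - fcoef g u"
  using fcoef_add[of f "\<lambda>t. (-1) * g t" u] L2T_cmult[of g "-1"] fcoef_cmult[of "-1" g u]
  by simp

lemma fcoef_mult_echar: "fcoef (\<lambda>t. echar k t * f t) u = fcoef f (u - k)"
proof -
  have "echar k t * exp (- \<i> * of_int u * of_real t) = exp (- \<i> * of_int (u - k) * of_real t)"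
    for t
    unfolding echar_def mult_exp_exp by (rule arg_cong[where f = exp]) (simp add: algebra_simps)
  then show ?thesis
    unfolding fcoef_def by (simp add: ac_simps)
qed

lemma fcoef_bounded: "\<exists>C. \<forall>u. cmod (fcoef f u) \<le> C"
proof -
  have "cmod (fcoef f u) \<le> (1 / (2*pi)) * (\<integral>t. norm (f t) \<partial>lebesgue_on {0..2*pi})" for u
  proof -
    have "cmod (fcoef f u) = (1 / (2*pi)) *
        norm (\<integral>t. f t * exp (- \<i> * of_int u * of_real t) \<partial>lebesgue_on {0..2*pi})"
      unfolding fcoef_def by (simp add: norm_mult norm_divide)
    also have "\<dots> \<le> (1 / (2*pi)) * (\<integral>t. norm (f t * exp (- \<i> * of_int u * of_real t)) \<partial>lebesgue_on {0..2*pi})"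
      by (intro mult_left_mono integral_norm_bound) auto
    finally show ?thesis by (simp add: norm_mult)
  qed
  then show ?thesis by blast
qed

lemma integral_exp_linear:
  fixes a :: complex
  assumes "0 \<le> T" "a \<noteq> 0"
  shows "integral {0..T} (\<lambda>t. exp (a * of_real t)) = (exp (a * of_real T) - 1) / a"
proof -
  have "((\<lambda>x. exp (a * x) / a) has_vector_derivative exp (a * t)) (at t within {0..T})" for t
    using assms
    by (intro derivative_eq_intros has_complex_derivative_imp_has_vector_derivative [unfolded o_def] | simp)+
  then have "((\<lambda>t. exp (a * of_real t)) has_integral exp (a * of_real T) / a - exp (a * of_real 0) / a) {0..T}"
    by (meson fundamental_theorem_of_calculus \<open>0 \<le> T\<close>)
  then show ?thesis
    by (simp add: diff_divide_distrib integral_unique)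
qed

lemma fcoef_echar: "fcoef (echar k) u = (if u = k then 1 else 0)"
proof -
  have int: "integrable (lebesgue_on {0..2*pi}) (\<lambda>t. exp (- \<i> * of_int (u - k) * of_real t))"
    by (rule continuous_imp_integrable_real) (intro continuous_intros)
  have "fcoef (echar k) u = fcoef (\<lambda>_. 1) (u - k)"
    using fcoef_mult_echar[of k "\<lambda>_. 1" u] by simp
  also have "\<dots> = (1 / (2 * pi)) * integral {0..2*pi} (\<lambda>t. exp ((- \<i> * of_int (u - k)) * of_real t))"
    unfolding fcoef_def using lebesgue_integral_eq_integral[OF int] by simp
  also have "\<dots> = (if u = k then 1 else 0)"
  proof (cases "u = k")
    case False
    have "exp ((- \<i> * of_int (u - k)) * of_real (2*pi)) = exp ((2 * of_int (k - u) * pi) * \<i>)"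
      by (simp add: algebra_simps)
    also have "\<dots> = 1" by (rule exp_integer_2pi) simp
    finally show ?thesis
      using False integral_exp_linear[of "2*pi" "- \<i> * of_int (u - k)"] by simp
  qed (simp add: scaleR_conv_of_real)
  finally show ?thesis .
qed

lemma coef_vanishing_add:
  "f \<in> coef_vanishing U \<Longrightarrow> g \<in> coef_vanishing U \<Longrightarrow> (\<lambda>t. f t + g t) \<in> coef_vanishing U"
  unfolding coef_vanishing_def by (auto simp: fcoef_add L2T_add)

lemma coef_vanishing_diff:
  "f \<in> coef_vanishing U \<Longrightarrow> g \<in> coef_vanishing U \<Longrightarrow> (\<lambda>t. f t - g t) \<in> coef_vanishing U"
  unfolding coef_vanishing_def by (auto simp: fcoef_diff L2T_diff)

lemma coef_vanishing_cmult: "f \<in> coef_vanishing U \<Longrightarrow> (\<lambda>t. a * f t) \<in> coef_vanishing U"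
  unfolding coef_vanishing_def by (auto simp: fcoef_cmult L2T_cmult)

lemma coef_vanishing_zero: "(\<lambda>t. 0) \<in> coef_vanishing U"
  using fcoef_cmult[of 0 "\<lambda>t. 0"] by (simp add: coef_vanishing_def L2T_continuous)

lemma coef_vanishing_sum:
  "(\<And>i. i \<in> I \<Longrightarrow> f i \<in> coef_vanishing U) \<Longrightarrow> (\<lambda>t. \<Sum>i\<in>I. f i t) \<in> coef_vanishing U"
  by (induction I rule: infinite_finite_induct) (auto simp: coef_vanishing_zero coef_vanishing_add)

lemma coef_vanishing_mono: "f \<in> coef_vanishing U \<Longrightarrow> V \<subseteq> U \<Longrightarrow> f \<in> coef_vanishing V"
  unfolding coef_vanishing_def by auto

lemma coef_vanishing_echar: "k \<notin> U \<Longrightarrow> echar k \<in> coef_vanishing U"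
  unfolding coef_vanishing_def
  by (auto simp: fcoef_echar intro!: L2T_continuous continuous_intros)

lemma coef_vanishing_mult_echar:
  "f \<in> coef_vanishing U \<Longrightarrow> (\<And>u. u \<in> U \<Longrightarrow> u - k \<in> U) \<Longrightarrow>
    (\<lambda>t. echar k t * f t) \<in> coef_vanishing U"
  unfolding coef_vanishing_def by (auto simp: fcoef_mult_echar intro!: L2T_mult continuous_intros)

lemma coef_vanishing_mult_power:
  assumes f: "f \<in> coef_vanishing U" and U: "\<And>u. u \<in> U \<Longrightarrow> u - k \<in> U"
  shows "(\<lambda>t. (1 - \<gamma> * echar k t) ^ m * f t) \<in> coef_vanishing U"
proof (induction m)
  case (Suc m)
  then have "(\<lambda>t. (1 - \<gamma> * echar k t) ^ m * f t - \<gamma> * (echar k t * ((1 - \<gamma> * echar k t) ^ m * f t)))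
      \<in> coef_vanishing U"
    by (intro coef_vanishing_diff coef_vanishing_cmult coef_vanishing_mult_echar U)
  then show ?case by (simp add: algebra_simps)
qed (use f in simp)

lemma coef_vanishing_mult_prod:
  assumes f: "f \<in> coef_vanishing U" and U: "\<And>u. u \<in> U \<Longrightarrow> u - k \<in> U"
  shows "(\<lambda>t. (\<Prod>j<(n::nat). (1 - \<gamma> j * echar k t) ^ m j) * f t) \<in> coef_vanishing U"
proof (induction n)
  case (Suc n)
  from coef_vanishing_mult_power[OF Suc U, of "\<gamma> n" "m n"] show ?case
    by (simp add: ac_simps)
qed (use f in simp)

text \<open>If all coefficients of \<open>f = (1 - \<beta> e\<^sub>k) g\<close> on a \<open>(-k)\<close>-stable set \<open>U\<close> vanish, then
  \<open>\<hat>g(u) = \<beta>\<^sup>n \<hat>g(u - n k)\<close> for all \<open>u \<in> U\<close>, which tends to zero since \<open>\<hat>g\<close> is bounded.\<close>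
lemma coef_vanishing_divide:
  assumes f: "f \<in> coef_vanishing U" and \<beta>: "cmod \<beta> < 1" and U: "\<And>u. u \<in> U \<Longrightarrow> u - k \<in> U"
  shows "(\<lambda>t. f t / (1 - \<beta> * echar k t)) \<in> coef_vanishing U"
proof -
  define g where "g = (\<lambda>t. f t / (1 - \<beta> * echar k t))"
  have nz: "\<beta> * echar k t \<noteq> 1" for t
    using \<beta> by (metis norm_echar norm_mult norm_one mult.right_neutral less_irrefl)
  have "continuous_on UNIV (\<lambda>t. 1 / (1 - \<beta> * echar k t))"
    using nz by (intro continuous_intros) (simp add: right_minus_eq)
  then have gL: "L2T g"
    using L2T_mult[of "\<lambda>t. 1 / (1 - \<beta> * echar k t)" f] f
    unfolding g_def coef_vanishing_def by auto
  have L2: "L2T (\<lambda>t. \<beta> * (echar k t * g t))"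
    by (intro L2T_cmult L2T_mult[OF _ gL] continuous_intros)
  have fg: "f = (\<lambda>t. g t - \<beta> * (echar k t * g t))"
  proof
    fix t
    have "g t - \<beta> * (echar k t * g t) = (1 - \<beta> * echar k t) * g t"
      by (simp add: algebra_simps)
    then show "f t = g t - \<beta> * (echar k t * g t)"
      using nz[of t] by (simp add: g_def)
  qed
  have step: "fcoef g u = \<beta> * fcoef g (u - k)" if "u \<in> U" for u
  proof -
    have "fcoef f u = fcoef g u - \<beta> * fcoef g (u - k)"
      by (subst fg, subst fcoef_diff[OF gL L2]) (simp add: fcoef_cmult fcoef_mult_echar)
    moreover have "fcoef f u = 0" using f that unfolding coef_vanishing_def by auto
    ultimately show ?thesis by simp
  qed
  have iter: "fcoef g u = \<beta> ^ n * fcoef g (u - of_nat n * k)" if "u \<in> U" for u n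
    using that
  proof (induction n arbitrary: u)
    case (Suc n)
    then show ?case
      using step[OF Suc.prems] Suc.IH[OF U[OF Suc.prems]] by (simp add: algebra_simps)
  qed simp
  obtain C where C: "\<And>u. cmod (fcoef g u) \<le> C" using fcoef_bounded by blast
  have "fcoef g u = 0" if "u \<in> U" for u
  proof -
    have "cmod (fcoef g u) \<le> cmod \<beta> ^ n * C" for n
      using iter[OF that, of n] mult_left_mono[OF C, of "cmod \<beta> ^ n"]
      by (simp add: norm_mult norm_power)
    moreover have "(\<lambda>n. cmod \<beta> ^ n * C) \<longlonglongrightarrow> 0 * C"
      using \<beta> by (intro tendsto_mult_right LIMSEQ_power_zero) auto
    ultimately have "cmod (fcoef g u) \<le> 0 * C"
      by (intro LIMSEQ_le_const[where X = "\<lambda>n. cmod \<beta> ^ n * C"]) auto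
    then show ?thesis by simp
  qed
  with gL show ?thesis unfolding coef_vanishing_def g_def by auto
qed

lemma coef_vanishing_divide_power:
  assumes f: "f \<in> coef_vanishing U" and \<gamma>: "cmod \<gamma> < 1" and U: "\<And>u. u \<in> U \<Longrightarrow> u - k \<in> U"
  shows "(\<lambda>t. f t / (1 - \<gamma> * echar k t) ^ m) \<in> coef_vanishing U"
proof (induction m)
  case (Suc m)
  from coef_vanishing_divide[OF Suc \<gamma> U] show ?case
    by (simp add: divide_divide_eq_left ac_simps)
qed (use f in simp)

lemma coef_vanishing_divide_prod:
  assumes f: "f \<in> coef_vanishing U" and \<gamma>: "\<And>j. j < n \<Longrightarrow> cmod (\<gamma> j) < 1"
    and U: "\<And>u. u \<in> U \<Longrightarrow> u - k \<in> U"
  shows "(\<lambda>t. f t / (\<Prod>j<(n::nat). (1 - \<gamma> j * echar k t) ^ m j)) \<in> coef_vanishing U"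
  using \<gamma>
proof (induction n)
  case (Suc n)
  then have "(\<lambda>t. f t / (\<Prod>j<n. (1 - \<gamma> j * echar k t) ^ m j) / (1 - \<gamma> n * echar k t) ^ m n)
      \<in> coef_vanishing U"
    by (intro coef_vanishing_divide_power U) auto
  then show ?case by (simp add: divide_divide_eq_left ac_simps)
qed (use f in simp)

lemma coprime_linear_factors:
  fixes a b :: complex
  assumes "a \<noteq> b"
  shows "coprime [:1, -a:] [:1, -b:]"
proof (rule coprimeI)
  fix d assume d: "d dvd [:1, -a:]" "d dvd [:1, -b:]"
  define u where "u = b / (b - a)"
  define v where "v = - a / (b - a)"
  have "u + v = 1"
    using assms by (simp add: u_def v_def diff_divide_distrib[symmetric])
  moreover have "u * a + v * b = 0"
    using assms by (simp add: u_def v_def field_simps)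
  ultimately
  have "[:u:] * [:1, -a:] + [:v:] * [:1, -b:] = 1"
    by (simp add: one_pCons algebra_simps add_eq_0_iff)
  then have "d dvd 1"
    by (metis d dvd_add dvd_mult)
  then show "is_unit d" .
qed

lemma coprime_decomposition_degree:
  fixes A B R :: "complex poly"
  assumes "coprime A B" "A \<noteq> 0" "B \<noteq> 0" "R = 0 \<or> degree R < degree A + degree B"
  obtains X Y where "R = X * A + Y * B" "X = 0 \<or> degree X < degree B" "Y = 0 \<or> degree Y < degree A"
proof -
  obtain u v where uv: "u * A + v * B = 1"
    using bezout_coefficients_fst_snd[of A B] assms(1) by (auto simp: coprime_iff_gcd_eq_1)
  define q where "q = (R * u) div B"
  define X where "X = (R * u) mod B"
  define Y where "Y = R * v + q * A"
  have Ru: "R * u = q * B + X"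
    unfolding q_def X_def by simp
  have R: "R = X * A + Y * B"
  proof -
    have "R = (R * u) * A + (R * v) * B"
      using uv by (metis distrib_left mult.assoc mult.right_neutral)
    then show ?thesis
      unfolding Ru Y_def by (simp add: algebra_simps)
  qed
  have X: "X = 0 \<or> degree X < degree B"
    unfolding X_def using degree_mod_less[OF assms(3)] by blast
  have "Y = 0 \<or> degree Y < degree A"
  proof (cases "Y = 0")
    case False
    have "degree (X * A) < degree A + degree B \<or> X = 0"
      using X assms(2) by (auto simp: degree_mult_eq)
    then have "degree (R - X * A) < degree A + degree B"
      using assms(4) degree_diff_less[of R "degree A + degree B" "X * A"] False R
      by (cases "degree A + degree B") (auto simp: degree_mult_eq assms(3))
    moreover have "degree (R - X * A) = degree Y + degree B"
      using R False assms(3) by (simp add: degree_mult_eq)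
    ultimately show ?thesis by simp
  qed simp
  with R X that show ?thesis by blast
qed

definition linear_factors :: "nat \<Rightarrow> (nat \<Rightarrow> complex) \<Rightarrow> (nat \<Rightarrow> nat) \<Rightarrow> complex poly" where
  "linear_factors n \<beta> m = (\<Prod>j<n. [:1, - \<beta> j:] ^ m j)"

definition simple_fractions ::
    "nat \<Rightarrow> (nat \<Rightarrow> complex) \<Rightarrow> (nat \<Rightarrow> nat) \<Rightarrow> (nat \<Rightarrow> nat \<Rightarrow> complex) \<Rightarrow> complex \<Rightarrow> complex" where
  "simple_fractions n \<beta> m a z = (\<Sum>j<n. \<Sum>k\<in>{1..m j}. a j k / (1 - \<beta> j * z) ^ k)"

lemma poly_linear_factors: "poly (linear_factors n \<beta> m) z = (\<Prod>j<n. (1 - \<beta> j * z) ^ m j)"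
  unfolding linear_factors_def by (simp add: poly_prod poly_power mult.commute)

lemma linear_factors_nonzero: "linear_factors n \<beta> m \<noteq> 0"
  unfolding linear_factors_def by (simp add: prod_zero_iff)

lemma poly_linear_factors_nonzero:
  "(\<And>j. j < n \<Longrightarrow> 1 - \<beta> j * z \<noteq> 0) \<Longrightarrow> poly (linear_factors n \<beta> m) z \<noteq> 0"
  unfolding poly_linear_factors by (simp add: prod_zero_iff)

lemma linear_factors_Suc:
  "linear_factors (Suc n) \<beta> m = linear_factors n \<beta> m * [:1, - \<beta> n:] ^ m n"
  unfolding linear_factors_def by simp

lemma coprime_linear_factors_power:
  assumes "\<And>j. j < n \<Longrightarrow> \<beta> j \<noteq> b"
  shows "coprime (linear_factors n \<beta> m) ([:1, - b:] ^ k)"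
  unfolding linear_factors_def using assms
  by (intro prod_coprime_left) (auto intro!: coprime_linear_factors)

lemma coprime_monom_linear_factors: "coprime (monom 1 k) (linear_factors n \<beta> m)"
proof -
  have "coprime [:0, 1:] [:1, - b:]" for b :: complex
  proof (rule coprimeI)
    fix d assume "d dvd [:0, 1:]" "d dvd [:1, - b:]"
    moreover have "[:b:] * [:0, 1:] + 1 * [:1, - b:] = 1"
      by (simp add: one_pCons)
    ultimately show "is_unit d"
      by (metis dvd_add dvd_mult)
  qed
  then show ?thesis
    unfolding linear_factors_def monom_altdef by (simp add: prod_coprime_right)
qed

lemma simple_fractions_Suc:
  "simple_fractions (Suc n) \<beta> m a z =
     simple_fractions n \<beta> m a z + (\<Sum>k\<in>{1..m n}. a n k / (1 - \<beta> n * z) ^ k)"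
  unfolding simple_fractions_def by simp

lemma simple_fractions_cong:
  "(\<And>j k. j < n \<Longrightarrow> a j k = a' j k) \<Longrightarrow> simple_fractions n \<beta> m a z = simple_fractions n \<beta> m a' z"
  unfolding simple_fractions_def by simp

lemma simple_fractions_eq_fraction:
  "\<exists>P. \<forall>z. (\<forall>j<n. 1 - \<beta> j * z \<noteq> 0) \<longrightarrow>
     simple_fractions n \<beta> m a z = poly P z / poly (linear_factors n \<beta> m) z"
proof (induction n)
  case 0
  show ?case by (intro exI[of _ 0]) (simp add: simple_fractions_def)
next
  case (Suc n)
  then obtain P where P: "\<And>z. \<forall>j<n. 1 - \<beta> j * z \<noteq> 0 \<Longrightarrow>
      simple_fractions n \<beta> m a z = poly P z / poly (linear_factors n \<beta> m) z"
    by blast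
  define L where "L = [:1, - \<beta> n:]"
  define Pn where "Pn = (\<Sum>k\<in>{1..m n}. smult (a n k) (L ^ (m n - k)))"
  show ?case
  proof (intro exI[of _ "P * L ^ m n + Pn * linear_factors n \<beta> m"] allI impI)
    fix z assume z: "\<forall>j<Suc n. 1 - \<beta> j * z \<noteq> 0"
    have pL: "poly L z = 1 - \<beta> n * z" "poly L z \<noteq> 0"
      using z by (auto simp: L_def algebra_simps)
    have pA: "poly (linear_factors n \<beta> m) z \<noteq> 0"
      using z by (intro poly_linear_factors_nonzero) auto
    have "(\<Sum>k\<in>{1..m n}. a n k / (1 - \<beta> n * z) ^ k) = poly Pn z / poly L z ^ m n"
      unfolding Pn_def poly_sum sum_divide_distrib
    proof (intro sum.cong refl)
      fix k assume "k \<in> {1..m n}"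
      then have "poly L z ^ m n = poly L z ^ (m n - k) * poly L z ^ k"
        by (simp add: power_add[symmetric])
      then show "a n k / (1 - \<beta> n * z) ^ k = poly (smult (a n k) (L ^ (m n - k))) z / poly L z ^ m n"
        using pL by (simp add: poly_power)
    qed
    then have "simple_fractions (Suc n) \<beta> m a z =
        poly P z / poly (linear_factors n \<beta> m) z + poly Pn z / poly L z ^ m n"
      using P[of z] z by (simp add: simple_fractions_Suc)
    also have "\<dots> = poly (P * L ^ m n + Pn * linear_factors n \<beta> m) z /
        poly (linear_factors (Suc n) \<beta> m) z"
      unfolding linear_factors_Suc L_def[symmetric] poly_add poly_mult poly_power
      using add_frac_eq[OF pA, of "poly L z ^ m n" "poly P z" "poly Pn z"] pL(2) by (simp add: ac_simps)
    finally show "simple_fractions (Suc n) \<beta> m a z =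
        poly (P * L ^ m n + Pn * linear_factors n \<beta> m) z / poly (linear_factors (Suc n) \<beta> m) z" .
  qed
qed

lemma linear_power_fraction_expansion:
  fixes b :: complex
  assumes "b \<noteq> 0" "X = 0 \<or> degree X < s"
  shows "\<exists>c. \<forall>z. 1 - b * z \<noteq> 0 \<longrightarrow> poly X z / (1 - b * z) ^ s = (\<Sum>k\<in>{1..s}. c k / (1 - b * z) ^ k)"
  using assms(2)
proof (induction s arbitrary: X)
  case 0
  then have "X = 0" by simp
  then show ?case by simp
next
  case (Suc s)
  define L where "L = [:1, - b:]"
  have L: "L \<noteq> 0" "degree L = 1" "\<And>z. poly L z = 1 - b * z"
    using assms(1) by (auto simp: L_def algebra_simps)
  define q where "q = X div L"
  define r where "r = coeff (X mod L) 0"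
  have "X mod L = [:r:]"
    unfolding r_def using degree_mod_less[OF L(1), of X] L(2)
    by (metis degree_0 degree_0_id less_one)
  then have X: "X = q * L + [:r:]"
    unfolding q_def by (metis div_mult_mod_eq)
  have "q = 0 \<or> degree q < s"
  proof (cases "q = 0")
    case False
    then have "degree (q * L) = degree q + 1"
      using L by (simp add: degree_mult_eq)
    moreover have "degree X = degree (q * L)"
      unfolding X by (rule degree_add_eq_left) (simp add: \<open>degree (q * L) = degree q + 1\<close>)
    ultimately show ?thesis
      using Suc.prems by auto
  qed simp
  then obtain c where c: "\<And>z. 1 - b * z \<noteq> 0 \<Longrightarrow>
      poly q z / (1 - b * z) ^ s = (\<Sum>k\<in>{1..s}. c k / (1 - b * z) ^ k)"
    using Suc.IH by blast
  show ?case
  proof (intro exI[of _ "c(Suc s := r)"] allI impI)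
    fix z assume z: "1 - b * z \<noteq> 0"
    have "poly X z = poly q z * (1 - b * z) + r"
      unfolding X by (simp add: L)
    then have "poly X z / (1 - b * z) ^ Suc s = poly q z / (1 - b * z) ^ s + r / (1 - b * z) ^ Suc s"
      using z by (simp add: add_divide_distrib power_Suc2)
    also have "\<dots> = (\<Sum>k\<in>{1..Suc s}. (c(Suc s := r)) k / (1 - b * z) ^ k)"
      using c[OF z] by simp
    finally show "poly X z / (1 - b * z) ^ Suc s = (\<Sum>k\<in>{1..Suc s}. (c(Suc s := r)) k / (1 - b * z) ^ k)" .
  qed
qed

lemma fraction_eq_simple_fractions:
  assumes "inj_on \<beta> {..<n}" "\<And>j. j < n \<Longrightarrow> \<beta> j \<noteq> 0"
    and "X = 0 \<or> degree X < degree (linear_factors n \<beta> m)"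
  shows "\<exists>a. \<forall>z. (\<forall>j<n. 1 - \<beta> j * z \<noteq> 0) \<longrightarrow>
    poly X z / poly (linear_factors n \<beta> m) z = simple_fractions n \<beta> m a z"
  using assms
proof (induction n arbitrary: X)
  case 0
  then show ?case by (simp add: simple_fractions_def linear_factors_def)
next
  case (Suc n)
  define A where "A = linear_factors n \<beta> m"
  define L where "L = [:1, - \<beta> n:]"
  have A: "A \<noteq> 0" unfolding A_def by (rule linear_factors_nonzero)
  have L: "L ^ m n \<noteq> 0" "degree (L ^ m n) = m n"
    using Suc.prems(2) by (auto simp: L_def degree_power_eq)
  have "\<beta> j \<noteq> \<beta> n" if "j < n" for j
    using inj_onD[OF Suc.prems(1), of j n] that by auto
  then have "coprime A (L ^ m n)"
    unfolding A_def L_def by (rule coprime_linear_factors_power)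
  moreover have "X = 0 \<or> degree X < degree A + degree (L ^ m n)"
    using Suc.prems(3) A L unfolding linear_factors_Suc A_def[symmetric] L_def[symmetric]
    by (simp add: degree_mult_eq)
  ultimately obtain Y Z where XYZ: "X = Y * A + Z * L ^ m n"
    and Y: "Y = 0 \<or> degree Y < m n" and Z: "Z = 0 \<or> degree Z < degree A"
    using coprime_decomposition_degree[OF _ A L(1)] L(2) by metis
  have "inj_on \<beta> {..<n}"
    using Suc.prems(1) by (rule inj_on_subset) auto
  then obtain a where a: "\<And>z. \<forall>j<n. 1 - \<beta> j * z \<noteq> 0 \<Longrightarrow>
      poly Z z / poly A z = simple_fractions n \<beta> m a z"
    using Suc.IH[OF _ _ Z[unfolded A_def]] Suc.prems(2) unfolding A_def by auto
  obtain c where c: "\<And>z. 1 - \<beta> n * z \<noteq> 0 \<Longrightarrow>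
      poly Y z / (1 - \<beta> n * z) ^ m n = (\<Sum>k\<in>{1..m n}. c k / (1 - \<beta> n * z) ^ k)"
    using linear_power_fraction_expansion[OF _ Y] Suc.prems(2) by blast
  show ?case
  proof (intro exI[of _ "a(n := c)"] allI impI)
    fix z assume z: "\<forall>j<Suc n. 1 - \<beta> j * z \<noteq> 0"
    have "poly A z \<noteq> 0"
      unfolding A_def using z by (intro poly_linear_factors_nonzero) auto
    moreover have "poly L z = 1 - \<beta> n * z" "(1 - \<beta> n * z) ^ m n \<noteq> 0"
      using z by (simp_all add: L_def algebra_simps)
    ultimately have "poly X z / poly (linear_factors (Suc n) \<beta> m) z =
        poly Y z / (1 - \<beta> n * z) ^ m n + poly Z z / poly A z"
      unfolding XYZ linear_factors_Suc A_def[symmetric] L_def[symmetric]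
      by (simp add: add_frac_eq ac_simps)
    also have "\<dots> = simple_fractions (Suc n) \<beta> m (a(n := c)) z"
      using a[of z] c[of z] z unfolding simple_fractions_Suc
      by (simp add: simple_fractions_cong[of n "a(n := c)" a])
    finally show "poly X z / poly (linear_factors (Suc n) \<beta> m) z = simple_fractions (Suc n) \<beta> m (a(n := c)) z" .
  qed
qed

lemma coef_vanishing_echar_poly:
  assumes "\<And>k. coeff p k \<noteq> 0 \<Longrightarrow> int k + d \<notin> U"
  shows "(\<lambda>t. echar d t * poly p (chi t)) \<in> coef_vanishing U"
proof -
  have "(\<lambda>t. coeff p k * echar (int k + d) t) \<in> coef_vanishing U" for k
  proof (cases "coeff p k = 0")
    case True
    then show ?thesis using coef_vanishing_zero by simp
  next
    case False
    then show ?thesis using assms by (intro coef_vanishing_cmult coef_vanishing_echar)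
  qed
  then have "(\<lambda>t. \<Sum>k\<le>degree p. coeff p k * echar (int k + d) t) \<in> coef_vanishing U"
    by (rule coef_vanishing_sum)
  moreover have "echar d t * poly p (chi t) = (\<Sum>k\<le>degree p. coeff p k * echar (int k + d) t)" for t
    unfolding poly_altdef chi_power sum_distrib_left
    by (intro sum.cong refl) (simp add: echar_mult[symmetric] ac_simps)
  ultimately show ?thesis by simp
qed

lemma poly_chi_Hplus: "(\<lambda>t. poly p (chi t)) \<in> Hplus"
  using coef_vanishing_echar_poly[of p 0 "{u. u < 0}"] by (simp add: Hplus_eq_coef_vanishing)

lemma fraction_linear_factors_Hplus:
  assumes "\<And>j. j < n \<Longrightarrow> cmod (\<beta> j) < 1"
  shows "(\<lambda>t. poly P (chi t) / poly (linear_factors n \<beta> m) (chi t)) \<in> Hplus"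
proof -
  have "(\<lambda>t. poly P (chi t) / (\<Prod>j<n. (1 - \<beta> j * echar 1 t) ^ m j)) \<in> coef_vanishing {u. u < 0}"
    by (rule coef_vanishing_divide_prod[OF poly_chi_Hplus[unfolded Hplus_eq_coef_vanishing] assms]) auto
  then show ?thesis
    by (simp add: Hplus_eq_coef_vanishing poly_linear_factors chi_eq_echar[symmetric])
qed

lemma poly_root_factors_chi:
  fixes \<gamma> :: "nat \<Rightarrow> complex" and m :: "nat \<Rightarrow> nat"
  shows "poly (\<Prod>j<n. [:- \<gamma> j, 1:] ^ m j) (chi t) =
     chi t ^ (\<Sum>j<n. m j) * (\<Prod>j<n. (1 - \<gamma> j * echar (-1) t) ^ m j)"
proof -
  have "chi t - \<gamma> j = chi t * (1 - \<gamma> j * echar (-1) t)" for j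
    using echar_mult[of 1 t "-1"] by (simp add: chi_eq_echar algebra_simps)
  then show ?thesis
    by (simp add: poly_prod poly_power power_mult_distrib prod.distrib power_sum)
qed

lemma fraction_root_factors_Hperp:
  fixes \<gamma> :: "nat \<Rightarrow> complex" and m :: "nat \<Rightarrow> nat"
  assumes "\<And>j. j < n \<Longrightarrow> cmod (\<gamma> j) < 1" and "R = 0 \<or> degree R < (\<Sum>j<n. m j)"
  shows "(\<lambda>t. poly R (chi t) / poly (\<Prod>j<n. [:- \<gamma> j, 1:] ^ m j) (chi t)) \<in> Hperp"
proof -
  define S where "S = (\<Sum>j<n. m j)"
  have "(\<lambda>t. echar (- int S) t * poly R (chi t)) \<in> coef_vanishing {u. 0 \<le> u}"
  proof (rule coef_vanishing_echar_poly)
    fix k assume "coeff R k \<noteq> 0"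
    then have "k < S"
      using assms(2) le_degree[of R k] unfolding S_def by auto
    then show "int k + - int S \<notin> {u. 0 \<le> u}" by simp
  qed
  then have "(\<lambda>t. echar (- int S) t * poly R (chi t) / (\<Prod>j<n. (1 - \<gamma> j * echar (-1) t) ^ m j))
      \<in> coef_vanishing {u. 0 \<le> u}"
    by (rule coef_vanishing_divide_prod[OF _ assms(1)]) auto
  moreover have "echar (- int S) t * poly R (chi t) / (\<Prod>j<n. (1 - \<gamma> j * echar (-1) t) ^ m j) =
      poly R (chi t) / poly (\<Prod>j<n. [:- \<gamma> j, 1:] ^ m j) (chi t)" for t
    unfolding poly_root_factors_chi S_def[symmetric] inverse_chi_power[symmetric]
    by (simp add: field_simps)
  ultimately show ?thesis
    by (simp add: Hperp_eq_coef_vanishing)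
qed

lemma pi_minus_difference_coef_vanishing:
  assumes "is_pi_minus f h" "is_pi_minus f h'"
  shows "(\<lambda>t. h t - h' t) \<in> coef_vanishing UNIV"
proof -
  have h: "h \<in> coef_vanishing {u. 0 \<le> u}" "h' \<in> coef_vanishing {u. 0 \<le> u}"
    and fh: "(\<lambda>t. f t - h t) \<in> coef_vanishing {u. u < 0}" "(\<lambda>t. f t - h' t) \<in> coef_vanishing {u. u < 0}"
    using assms by (auto simp: is_pi_minus_def Hperp_eq_coef_vanishing Hplus_eq_coef_vanishing)
  have "(\<lambda>t. h t - h' t) = (\<lambda>t. (f t - h' t) - (f t - h t))"
    by simp
  then have "(\<lambda>t. h t - h' t) \<in> coef_vanishing {u. u < 0}"
    using coef_vanishing_diff[OF fh(2,1)] by simp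
  moreover have "(\<lambda>t. h t - h' t) \<in> coef_vanishing {u. 0 \<le> u}"
    using coef_vanishing_diff[OF h] .
  ultimately show ?thesis
    by (auto simp: coef_vanishing_def not_le[symmetric])
qed

lemma is_pi_plus_add_coef_vanishing:
  assumes "is_pi_plus f e" "d \<in> coef_vanishing UNIV"
  shows "is_pi_plus (\<lambda>t. f t + d t) e"
proof -
  have "(\<lambda>t. (f t - e t) + d t) \<in> Hperp"
    using assms unfolding is_pi_plus_def Hperp_eq_coef_vanishing
    by (intro coef_vanishing_add) (auto intro: coef_vanishing_mono)
  with assms(1) show ?thesis
    unfolding is_pi_plus_def by (simp add: algebra_simps)
qed

lemma one_minus_mult_chi_nonzero: "cmod a < 1 \<Longrightarrow> 1 - a * chi t \<noteq> 0"
  by (metis norm_chi norm_mult mult.right_neutral right_minus_eq norm_one less_irrefl)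

locale hankel_symbol =
  fixes \<sigma> :: nat and \<alpha> :: "nat \<Rightarrow> complex" and s :: "nat \<Rightarrow> nat"
  assumes inj_\<alpha>: "inj_on \<alpha> {..<\<sigma>}"
    and norm_\<alpha>: "\<And>i. i < \<sigma> \<Longrightarrow> 0 < cmod (\<alpha> i) \<and> cmod (\<alpha> i) < 1"
begin

definition B :: "complex poly" where
  "B = linear_factors \<sigma> (\<lambda>j. cnj (\<alpha> j)) s"

definition Q :: "complex poly" where
  "Q = (\<Prod>i<\<sigma>. [:- \<alpha> i, 1:] ^ s i)"

abbreviation S :: nat where
  "S \<equiv> \<Sum>i<\<sigma>. s i"

abbreviation c :: complex where
  "c \<equiv> cconst \<sigma> \<alpha> s"

lemma c_nonzero: "c \<noteq> 0"
  using norm_\<alpha> by (force simp: cconst_def prod_zero_iff)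

lemma one_minus_cnj_mult_chi_nonzero: "j < \<sigma> \<Longrightarrow> 1 - cnj (\<alpha> j) * chi t \<noteq> 0"
  using norm_\<alpha> by (intro one_minus_mult_chi_nonzero) simp

lemma poly_B_chi_nonzero: "poly B (chi t) \<noteq> 0"
  unfolding B_def by (intro poly_linear_factors_nonzero one_minus_cnj_mult_chi_nonzero)

lemma poly_Q_chi_nonzero: "poly Q (chi t) \<noteq> 0"
proof -
  have "chi t \<noteq> \<alpha> i" if "i < \<sigma>" for i
    using norm_\<alpha>[OF that] by (metis norm_chi less_irrefl)
  then show ?thesis
    unfolding Q_def by (simp add: poly_prod prod_zero_iff)
qed

lemma B_nonzero: "B \<noteq> 0"
  unfolding B_def by (rule linear_factors_nonzero)

lemma Q_nonzero: "Q \<noteq> 0"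
  using poly_Q_chi_nonzero by auto

lemma degree_Q: "degree Q = S"
  unfolding Q_def by (subst degree_prod_eq_sum_degree) (auto simp: degree_linear_power)

lemma g1_eq: "g1 \<sigma> \<alpha> s t = c * poly B (chi t)"
  unfolding g1_def B_def poly_linear_factors ..

lemma g2_eq: "g2 \<sigma> \<alpha> s t = poly Q (chi t) / chi t ^ S"
  unfolding g2_def Q_def poly_root_factors_chi cnj_chi by simp

lemma Espace_fraction:
  assumes "e \<in> Espace \<sigma> \<alpha> s"
  obtains P where "e = (\<lambda>t. poly P (chi t) / poly B (chi t))"
proof -
  obtain a where a: "e = (\<lambda>t. simple_fractions \<sigma> (\<lambda>j. cnj (\<alpha> j)) s a (chi t))"
    using assms unfolding Espace_def simple_fractions_def by blast
  obtain P where "\<forall>z. (\<forall>j<\<sigma>. 1 - cnj (\<alpha> j) * z \<noteq> 0) \<longrightarrow>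
      simple_fractions \<sigma> (\<lambda>j. cnj (\<alpha> j)) s a z = poly P z / poly B z"
    using simple_fractions_eq_fraction[of \<sigma> "\<lambda>j. cnj (\<alpha> j)" s a] unfolding B_def by blast
  then have "e = (\<lambda>t. poly P (chi t) / poly B (chi t))"
    unfolding a using one_minus_cnj_mult_chi_nonzero by auto
  then show ?thesis ..
qed

lemma fraction_in_Espace:
  assumes "X = 0 \<or> degree X < degree B"
  shows "(\<lambda>t. poly X (chi t) / poly B (chi t)) \<in> Espace \<sigma> \<alpha> s"
proof -
  have "inj_on (\<lambda>j. cnj (\<alpha> j)) {..<\<sigma>}"
    using inj_\<alpha> by (auto simp: inj_on_def)
  then obtain a where "\<forall>z. (\<forall>j<\<sigma>. 1 - cnj (\<alpha> j) * z \<noteq> 0) \<longrightarrow>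
      poly X z / poly B z = simple_fractions \<sigma> (\<lambda>j. cnj (\<alpha> j)) s a z"
    using fraction_eq_simple_fractions[OF _ _ assms[unfolded B_def]] norm_\<alpha> unfolding B_def by force
  then have "(\<lambda>t. poly X (chi t) / poly B (chi t)) =
      (\<lambda>t. simple_fractions \<sigma> (\<lambda>j. cnj (\<alpha> j)) s a (chi t))"
    using one_minus_cnj_mult_chi_nonzero by auto
  then show ?thesis
    unfolding Espace_def simple_fractions_def by blast
qed

lemma PhiN_mult_fraction:
  "PhiN \<sigma> \<alpha> s N t * (poly P (chi t) / poly B (chi t)) =
     poly (smult c (monom 1 (N + 1 + S) * P)) (chi t) / poly Q (chi t)"
  unfolding PhiN_def g1_eq g2_eq
  using poly_B_chi_nonzero[of t] poly_Q_chi_nonzero[of t]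
  by (simp add: poly_monom power_add field_simps)

lemma PhiTN_mult_fraction:
  "PhiTN \<sigma> \<alpha> s N t * (poly R (chi t) / poly Q (chi t)) =
     poly (smult (1 / c) R) (chi t) / poly (monom 1 (N + 1 + S) * B) (chi t)"
  unfolding PhiTN_def g1_eq g2_eq
  using poly_B_chi_nonzero[of t] poly_Q_chi_nonzero[of t] c_nonzero
  by (simp add: poly_monom power_add field_simps)

lemma pi_minus_PhiN_Espace:
  assumes "e \<in> Espace \<sigma> \<alpha> s"
  obtains R where "R = 0 \<or> degree R < S"
    and "is_pi_minus (\<lambda>t. PhiN \<sigma> \<alpha> s N t * e t) (\<lambda>t. poly R (chi t) / poly Q (chi t))"
proof -
  obtain P where e: "e = (\<lambda>t. poly P (chi t) / poly B (chi t))"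
    using Espace_fraction[OF assms] .
  define W where "W = smult c (monom 1 (N + 1 + S) * P)"
  have R: "W mod Q = 0 \<or> degree (W mod Q) < S"
    using degree_mod_less[OF Q_nonzero, of W] degree_Q by simp
  have "PhiN \<sigma> \<alpha> s N t * e t - poly (W mod Q) (chi t) / poly Q (chi t) = poly (W div Q) (chi t)" for t
  proof -
    have "poly W (chi t) = poly (W div Q) (chi t) * poly Q (chi t) + poly (W mod Q) (chi t)"
      by (metis div_mult_mod_eq poly_add poly_mult)
    then show ?thesis
      unfolding e PhiN_mult_fraction W_def[symmetric] using poly_Q_chi_nonzero[of t]
      by (simp add: add_divide_distrib)
  qed
  moreover have "(\<lambda>t. poly (W mod Q) (chi t) / poly Q (chi t)) \<in> Hperp"
    unfolding Q_def using norm_\<alpha> R[unfolded Q_def] by (intro fraction_root_factors_Hperp) auto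
  ultimately have "is_pi_minus (\<lambda>t. PhiN \<sigma> \<alpha> s N t * e t) (\<lambda>t. poly (W mod Q) (chi t) / poly Q (chi t))"
    unfolding is_pi_minus_def using poly_chi_Hplus by simp
  with R show ?thesis by (rule that)
qed

lemma pi_plus_PhiTN_fraction:
  assumes "R = 0 \<or> degree R < S"
  obtains e' where "e' \<in> Espace \<sigma> \<alpha> s"
    and "is_pi_plus (\<lambda>t. PhiTN \<sigma> \<alpha> s N t * (poly R (chi t) / poly Q (chi t))) e'"
proof -
  define M where "M = N + 1 + S"
  have deg: "smult (1 / c) R = 0 \<or> degree (smult (1 / c) R) < degree (monom (1::complex) M) + degree B"
    using assms unfolding M_def by (auto simp: degree_monom_eq)
  obtain X Y where XY: "smult (1 / c) R = X * monom 1 M + Y * B"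
    and X: "X = 0 \<or> degree X < degree B" and Y: "Y = 0 \<or> degree Y < degree (monom (1::complex) M)"
    using coprime_decomposition_degree[OF coprime_monom_linear_factors[of M \<sigma> "\<lambda>j. cnj (\<alpha> j)" s, folded B_def]
        _ B_nonzero deg]
    by auto
  define e' where "e' = (\<lambda>t. poly X (chi t) / poly B (chi t))"
  have split: "(x * w + y * b) / (w * b) - x / b = inverse w * y"
    if "b \<noteq> 0" "w \<noteq> 0" for x y w b :: complex
    using that by (simp add: field_simps)
  have "PhiTN \<sigma> \<alpha> s N t * (poly R (chi t) / poly Q (chi t)) - e' t = echar (- int M) t * poly Y (chi t)"
    for t
    unfolding PhiTN_mult_fraction M_def[symmetric] XY e'_def inverse_chi_power[symmetric]
    using split[OF poly_B_chi_nonzero, of "chi t ^ M"] by (simp add: poly_monom)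
  moreover have "(\<lambda>t. echar (- int M) t * poly Y (chi t)) \<in> Hperp"
    unfolding Hperp_eq_coef_vanishing
  proof (rule coef_vanishing_echar_poly)
    fix k assume "coeff Y k \<noteq> 0"
    then have "k < M"
      using Y le_degree[of Y k] by (auto simp: degree_monom_eq)
    then show "int k + - int M \<notin> {u. 0 \<le> u}" by simp
  qed
  moreover have "e' \<in> Hplus"
    unfolding e'_def B_def using norm_\<alpha> by (intro fraction_linear_factors_Hplus) simp
  ultimately have "is_pi_plus (\<lambda>t. PhiTN \<sigma> \<alpha> s N t * (poly R (chi t) / poly Q (chi t))) e'"
    unfolding is_pi_plus_def by simp
  moreover have "e' \<in> Espace \<sigma> \<alpha> s"
    unfolding e'_def using X by (rule fraction_in_Espace)
  ultimately show ?thesis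
    using that by blast
qed

lemma PhiTN_mult_coef_vanishing:
  assumes "d \<in> coef_vanishing UNIV"
  shows "(\<lambda>t. PhiTN \<sigma> \<alpha> s N t * d t) \<in> coef_vanishing UNIV"
proof -
  have "(\<lambda>t. g2 \<sigma> \<alpha> s t * d t) \<in> coef_vanishing UNIV"
    unfolding g2_def cnj_chi by (rule coef_vanishing_mult_prod[OF assms]) simp
  then have "(\<lambda>t. g2 \<sigma> \<alpha> s t * d t / (\<Prod>j<\<sigma>. (1 - cnj (\<alpha> j) * echar 1 t) ^ s j)) \<in> coef_vanishing UNIV"
    by (rule coef_vanishing_divide_prod) (use norm_\<alpha> in auto)
  then have "(\<lambda>t. echar (- int (N + 1)) t * (1 / c * (g2 \<sigma> \<alpha> s t * d t / poly B (chi t))))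
      \<in> coef_vanishing UNIV"
    unfolding B_def poly_linear_factors chi_eq_echar
    by (intro coef_vanishing_mult_echar coef_vanishing_cmult) auto
  moreover have "PhiTN \<sigma> \<alpha> s N t * d t =
      echar (- int (N + 1)) t * (1 / c * (g2 \<sigma> \<alpha> s t * d t / poly B (chi t)))" for t
    unfolding PhiTN_def g1_eq inverse_chi_power by (simp add: field_simps)
  ultimately show ?thesis
    by simp
qed

end

theorem mainTheorem3:
  fixes \<sigma> :: nat and \<alpha> :: "nat \<Rightarrow> complex" and s :: "nat \<Rightarrow> nat" and N :: nat
  assumes "inj_on \<alpha> {..<\<sigma>}"
    and "\<And>i. i < \<sigma> \<Longrightarrow> 0 < cmod (\<alpha> i) \<and> cmod (\<alpha> i) < 1"
    and "\<And>i. i < \<sigma> \<Longrightarrow> s i > 0"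
  shows "\<forall>e \<in> Espace \<sigma> \<alpha> s. \<forall>h.
           is_pi_minus (\<lambda>t. PhiN \<sigma> \<alpha> s N t * e t) h \<longrightarrow>
           (\<exists>e' \<in> Espace \<sigma> \<alpha> s. is_pi_plus (\<lambda>t. PhiTN \<sigma> \<alpha> s N t * h t) e')"
proof (intro ballI allI impI)
  fix e h
  assume e: "e \<in> Espace \<sigma> \<alpha> s" and h: "is_pi_minus (\<lambda>t. PhiN \<sigma> \<alpha> s N t * e t) h"
  interpret hankel_symbol \<sigma> \<alpha> s
    using assms(1,2) by unfold_locales
  obtain R where R: "R = 0 \<or> degree R < S"
    and h0: "is_pi_minus (\<lambda>t. PhiN \<sigma> \<alpha> s N t * e t) (\<lambda>t. poly R (chi t) / poly Q (chi t))"
    using pi_minus_PhiN_Espace[OF e] .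
  obtain e' where e': "e' \<in> Espace \<sigma> \<alpha> s"
    and pi_plus: "is_pi_plus (\<lambda>t. PhiTN \<sigma> \<alpha> s N t * (poly R (chi t) / poly Q (chi t))) e'"
    using pi_plus_PhiTN_fraction[OF R] .
  have "(\<lambda>t. h t - poly R (chi t) / poly Q (chi t)) \<in> coef_vanishing UNIV"
    using pi_minus_difference_coef_vanishing[OF h h0] .
  from is_pi_plus_add_coef_vanishing[OF pi_plus PhiTN_mult_coef_vanishing[OF this, where N = N]]
  have "is_pi_plus (\<lambda>t. PhiTN \<sigma> \<alpha> s N t * h t) e'"
    by (simp add: algebra_simps)
  with e' show "\<exists>e' \<in> Espace \<sigma> \<alpha> s. is_pi_plus (\<lambda>t. PhiTN \<sigma> \<alpha> s N t * h t) e'" by blast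
qed

end
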